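(* Let $(X,G)$ be a minimal topological dynamical system. If $\pi_{eq}$ is almost $N$ to one for some $N\in\mathbb N\cup\{\infty\}$, then $|E|\ge N$ for every $E\in\mathcal X$.
   Context: $G$ is an infinite countable discrete group; a tds $(X,G)$ is a compact metric space with a $G$-action by homeomorphisms; minimal means no proper nonempty closed invariant subset. $\pi_{eq}:X\to X_{eq}$ is the factor map onto the maximal equicontinuous factor; it is almost $N$ to one if $\{y\in X_{eq}:|\pi_{eq}^{-1}(y)|=N\}$ is a residual subset of $X_{eq}$. $2^X$ is the space of nonempty closed subsets of $X$ with the Hausdorff metric, and $\mathcal X=\overline{\{\pi_{eq}^{-1}(y):y\in X_{eq}\}}\subset 2^X$. *)

theory Defs
  imports "HOL-Analysis.Analysis" "HOL-Library.Extended_Nat"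
begin

definition tds :: "'a::metric_space set \<Rightarrow> ('g::group_add \<Rightarrow> 'a \<Rightarrow> 'a) \<Rightarrow> bool" where
  "tds X act \<longleftrightarrow> compact X \<and>
     (\<forall>x\<in>X. act 0 x = x) \<and>
     (\<forall>g h. \<forall>x\<in>X. act (g + h) x = act g (act h x)) \<and>
     (\<forall>g. homeomorphism X X (act g) (act (- g)))"

definition minimal_tds :: "'a::metric_space set \<Rightarrow> ('g::group_add \<Rightarrow> 'a \<Rightarrow> 'a) \<Rightarrow> bool" where
  "minimal_tds X act \<longleftrightarrow> tds X act \<and>
     (\<forall>A. A \<subseteq> X \<and> A \<noteq> {} \<and> closed A \<and> (\<forall>g. act g ` A \<subseteq> A) \<longrightarrow> A = X)"

definition equicontinuous_tds :: "'a::metric_space set \<Rightarrow> ('g::group_add \<Rightarrow> 'a \<Rightarrow> 'a) \<Rightarrow> bool" where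
  "equicontinuous_tds X act \<longleftrightarrow> tds X act \<and>
     (\<forall>e>0. \<exists>d>0. \<forall>x\<in>X. \<forall>y\<in>X. dist x y < d \<longrightarrow> (\<forall>g. dist (act g x) (act g y) < e))"

definition factor_map ::
  "'a::metric_space set \<Rightarrow> ('g::group_add \<Rightarrow> 'a \<Rightarrow> 'a) \<Rightarrow> 'b::metric_space set \<Rightarrow> ('g \<Rightarrow> 'b \<Rightarrow> 'b)
     \<Rightarrow> ('a \<Rightarrow> 'b) \<Rightarrow> bool" where
  "factor_map X act Y actY p \<longleftrightarrow> tds X act \<and> tds Y actY \<and>
     continuous_on X p \<and> p ` X = Y \<and> (\<forall>g. \<forall>x\<in>X. p (act g x) = actY g (p x))"

text \<open>p : (X,act) \<rightarrow> (Y,actY) is the maximal equicontinuous factor map: Y is equicontinuous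
  and every equicontinuous factor of X factors through p. Every compact metric space embeds
  into the Hilbert cube, so it suffices to quantify over factors living in the type
  nat \<Rightarrow> real (with its product metric).\<close>
definition max_equicontinuous_factor ::
  "'a::metric_space set \<Rightarrow> ('g::group_add \<Rightarrow> 'a \<Rightarrow> 'a) \<Rightarrow> 'b::metric_space set \<Rightarrow> ('g \<Rightarrow> 'b \<Rightarrow> 'b)
     \<Rightarrow> ('a \<Rightarrow> 'b) \<Rightarrow> bool" where
  "max_equicontinuous_factor X act Y actY p \<longleftrightarrow>
     factor_map X act Y actY p \<and> equicontinuous_tds Y actY \<and>
     (\<forall>(Z :: (nat \<Rightarrow> real) set) actZ r.
        factor_map X act Z actZ r \<and> equicontinuous_tds Z actZ \<longrightarrow>
        (\<exists>f. factor_map Y actY Z actZ f \<and> (\<forall>x\<in>X. r x = f (p x))))"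

definition ecard :: "'a set \<Rightarrow> enat" where
  "ecard S = (if finite S then enat (card S) else \<infinity>)"

definition residual_in :: "'b::topological_space set \<Rightarrow> 'b set \<Rightarrow> bool" where
  "residual_in Y A \<longleftrightarrow> A \<subseteq> Y \<and> (\<exists>U :: nat \<Rightarrow> 'b set.
     (\<forall>n. openin (top_of_set Y) (U n) \<and> Y \<subseteq> closure (U n)) \<and> Y \<inter> (\<Inter>n. U n) \<subseteq> A)"

definition almost_N_to_one :: "'a set \<Rightarrow> 'b::topological_space set \<Rightarrow> ('a \<Rightarrow> 'b) \<Rightarrow> enat \<Rightarrow> bool" where
  "almost_N_to_one X Y p N \<longleftrightarrow> residual_in Y {y\<in>Y. ecard {x\<in>X. p x = y} = N}"

definition hausdist :: "'a::metric_space set \<Rightarrow> 'a set \<Rightarrow> real" where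
  "hausdist A B = max (SUP a\<in>A. infdist a B) (SUP b\<in>B. infdist b A)"

text \<open>The closure in 2^X (Hausdorff metric) of the set of fibres of p.\<close>
definition fibre_closure :: "'a::metric_space set \<Rightarrow> 'b set \<Rightarrow> ('a \<Rightarrow> 'b) \<Rightarrow> 'a set set" where
  "fibre_closure X Y p = {E. E \<noteq> {} \<and> closed E \<and> E \<subseteq> X \<and>
      (\<forall>e>0. \<exists>y\<in>Y. hausdist E {x\<in>X. p x = y} < e)}"

end

theory Submission
  imports Defs
begin

(* Let E be in the closure of the fibres and have m points. For e > 0 the set of y whose fibre
  is covered by m balls of radius e is open, because p is a closed map. It is also dense: a
  fibre Hausdorff-close to E is covered by m small balls around E, the uniformly continuous map
  act g carries this cover to a cover of the fibre over actY g y, and by minimality these points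
  come arbitrarily close to every point of Y. By Baire, some fibre with exactly N points is
  covered by m balls of every radius, and pigeonholing m + 1 of its points into m balls of
  radius smaller than half their mutual distances shows that it has at most m points. *)

lemma hausdist_commute: "hausdist A B = hausdist B A"
  by (simp add: hausdist_def max.commute)

lemma hausdist_less_imp_subset_Union_balls:
  fixes A B :: "'a::metric_space set"
  assumes "bounded A" "B \<noteq> {}" "hausdist A B < d"
  shows "A \<subseteq> (\<Union>b\<in>B. ball b d)"
proof
  fix a assume "a \<in> A"
  obtain b0 where "b0 \<in> B" using assms(2) by blast
  obtain c where c: "\<forall>x\<in>A. dist b0 x \<le> c"
    using assms(1) bounded_any_center by metis
  have "bdd_above ((\<lambda>x. infdist x B) ` A)"
  proof (rule bdd_aboveI2)
    fix x assume "x \<in> A"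
    then show "infdist x B \<le> c"
      using infdist_le[OF \<open>b0 \<in> B\<close>, of x] c by (metis dist_commute order_trans)
  qed
  then have "infdist a B \<le> (SUP x\<in>A. infdist x B)"
    by (rule cSUP_upper[OF \<open>a \<in> A\<close>])
  also have "\<dots> < d"
    using assms(3) by (simp add: hausdist_def)
  finally have "(INF b\<in>B. dist a b) < d"
    using assms(2) by (simp add: infdist_notempty)
  then obtain b where "b \<in> B" "dist a b < d"
    using cInf_lessD[of "(\<lambda>b. dist a b) ` B" d] assms(2) by auto
  then show "a \<in> (\<Union>b\<in>B. ball b d)"
    by (auto simp: dist_commute)
qed

definition coverable_by_balls :: "'a::metric_space set \<Rightarrow> nat \<Rightarrow> real \<Rightarrow> bool" where
  "coverable_by_balls S m e \<longleftrightarrow> (\<exists>C. finite C \<and> card C \<le> m \<and> S \<subseteq> (\<Union>c\<in>C. ball c e))"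

lemma coverable_by_balls_mono:
  assumes "coverable_by_balls S m e" "e \<le> e'"
  shows "coverable_by_balls S m e'"
proof -
  obtain C where "finite C" "card C \<le> m" "S \<subseteq> (\<Union>c\<in>C. ball c e)"
    using assms(1) unfolding coverable_by_balls_def by blast
  moreover have "(\<Union>c\<in>C. ball c e) \<subseteq> (\<Union>c\<in>C. ball c e')"
    using subset_ball[OF assms(2)] by (rule UN_mono[OF order_refl])
  ultimately show ?thesis
    unfolding coverable_by_balls_def by blast
qed

lemma eventually_at_right_0_separated:
  fixes T :: "'a::metric_space set"
  assumes "finite T"
  shows "\<forall>\<^sub>F e in at_right 0. \<forall>a\<in>T. \<forall>b\<in>T. a \<noteq> b \<longrightarrow> 2 * e < dist a b"
proof (intro eventually_ball_finite ballI assms)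
  fix a b assume "a \<in> T" "b \<in> T"
  show "\<forall>\<^sub>F e in at_right 0. a \<noteq> b \<longrightarrow> 2 * e < dist a b"
  proof (cases "a = b")
    case False
    then show ?thesis
      unfolding eventually_at_right_field by (auto intro!: exI[of _ "dist a b / 2"])
  qed simp
qed

lemma ecard_le_if_coverable_by_balls:
  fixes S :: "'a::metric_space set"
  assumes cover: "\<And>e. e > 0 \<Longrightarrow> coverable_by_balls S m e"
  shows "ecard S \<le> enat m"
proof (rule ccontr)
  assume "\<not> ecard S \<le> enat m"
  then obtain T where T: "T \<subseteq> S" "finite T" "card T = Suc m"
  proof (cases "finite S")
    case True
    with \<open>\<not> ecard S \<le> enat m\<close> have "Suc m \<le> card S" by (simp add: ecard_def)
    then show ?thesis using obtain_subset_with_card_n that by metis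
  next
    case False
    then show ?thesis using infinite_arbitrarily_large that by metis
  qed
  have "\<forall>\<^sub>F e in at_right 0. 0 < e \<and> (\<forall>a\<in>T. \<forall>b\<in>T. a \<noteq> b \<longrightarrow> 2 * e < dist a b)"
    using eventually_at_right_less eventually_at_right_0_separated[OF T(2)]
    by (rule eventually_conj)
  then have "\<exists>e. 0 < e \<and> (\<forall>a\<in>T. \<forall>b\<in>T. a \<noteq> b \<longrightarrow> 2 * e < dist a b)"
    by (rule eventually_happens'[OF trivial_limit_at_right_real])
  then obtain e :: real where "e > 0" and separated: "\<forall>a\<in>T. \<forall>b\<in>T. a \<noteq> b \<longrightarrow> 2 * e < dist a b"
    by blast
  obtain C where C: "finite C" "card C \<le> m" "T \<subseteq> (\<Union>c\<in>C. ball c e)"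
    using cover[OF \<open>e > 0\<close>] T(1) unfolding coverable_by_balls_def by blast
  then have "\<forall>a\<in>T. \<exists>c\<in>C. dist c a < e"
    by fastforce
  then obtain h where h: "\<forall>a\<in>T. h a \<in> C \<and> dist (h a) a < e"
    by metis
  have "inj_on h T"
  proof (rule inj_onI)
    fix a b assume "a \<in> T" "b \<in> T" "h a = h b"
    then have "dist (h a) a < e" "dist (h a) b < e"
      using h by metis+
    then have "dist a b < 2 * e"
      using dist_triangle3[of a b "h a"] by linarith
    then show "a = b" using separated \<open>a \<in> T\<close> \<open>b \<in> T\<close> by force
  qed
  then have "card T \<le> card C"
    using card_inj_on_le h C(1) by blast
  with T(3) C(2) show False by simp
qed

lemma openin_fibres_subset:
  fixes p :: "'a::metric_space \<Rightarrow> 'b::metric_space"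
  assumes "compact X" "continuous_on X p" "open W"
  shows "openin (top_of_set (p ` X)) {y \<in> p ` X. {x \<in> X. p x = y} \<subseteq> W}"
proof -
  have "compact (p ` (X - W))"
    using assms by (intro compact_continuous_image continuous_on_subset[OF assms(2)] compact_diff) auto
  then have "closedin (top_of_set (p ` X)) (p ` (X - W))"
    by (intro closed_subset compact_imp_closed) auto
  then have "openin (top_of_set (p ` X)) (p ` X - p ` (X - W))"
    by (rule openin_diff[OF openin_subtopology_self])
  also have "p ` X - p ` (X - W) = {y \<in> p ` X. {x \<in> X. p x = y} \<subseteq> W}"
    by (auto simp: image_iff) (metis DiffI)
  finally show ?thesis .
qed

lemma openin_coverable_fibres:
  fixes p :: "'a::metric_space \<Rightarrow> 'b::metric_space"
  assumes "compact X" "continuous_on X p"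
  shows "openin (top_of_set (p ` X)) {y \<in> p ` X. coverable_by_balls {x \<in> X. p x = y} m e}"
proof -
  have eq: "{y \<in> p ` X. coverable_by_balls {x \<in> X. p x = y} m e} =
      (\<Union>C\<in>{C. finite C \<and> card C \<le> m}. {y \<in> p ` X. {x \<in> X. p x = y} \<subseteq> (\<Union>c\<in>C. ball c e)})"
    unfolding coverable_by_balls_def by blast
  have "openin (top_of_set (p ` X)) {y \<in> p ` X. {x \<in> X. p x = y} \<subseteq> (\<Union>c\<in>C. ball c e)}" for C
    by (intro openin_fibres_subset[OF assms] open_UN ballI open_ball)
  then show ?thesis
    unfolding eq by (intro openin_Union) blast
qed

lemma residual_in_Int:
  assumes "residual_in Y A" "residual_in Y B"
  shows "residual_in Y (A \<inter> B)"
proof -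
  obtain U :: "nat \<Rightarrow> 'a set" where
    U: "\<forall>n. openin (top_of_set Y) (U n) \<and> Y \<subseteq> closure (U n)" "Y \<inter> (\<Inter>n. U n) \<subseteq> A"
    using assms(1) unfolding residual_in_def by blast
  obtain V :: "nat \<Rightarrow> 'a set" where
    V: "\<forall>n. openin (top_of_set Y) (V n) \<and> Y \<subseteq> closure (V n)" "Y \<inter> (\<Inter>n. V n) \<subseteq> B"
    using assms(2) unfolding residual_in_def by blast
  define W where "W n = (if even n then U (n div 2) else V (n div 2))" for n
  have "(\<Inter>n. W n) \<subseteq> U n \<inter> V n" for n
    using INT_lower[of "2 * n" UNIV W] INT_lower[of "2 * n + 1" UNIV W] by (simp add: W_def)
  then have "Y \<inter> (\<Inter>n. W n) \<subseteq> (Y \<inter> (\<Inter>n. U n)) \<inter> (Y \<inter> (\<Inter>n. V n))"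
    by (simp add: INT_greatest le_infI2)
  also have "\<dots> \<subseteq> A \<inter> B"
    using U(2) V(2) by (rule Int_mono)
  finally have "Y \<inter> (\<Inter>n. W n) \<subseteq> A \<inter> B" .
  moreover have "\<forall>n. openin (top_of_set Y) (W n) \<and> Y \<subseteq> closure (W n)"
    using U(1) V(1) by (simp add: W_def)
  moreover have "A \<inter> B \<subseteq> Y"
    using assms(1) by (simp add: residual_in_def le_infI1)
  ultimately show ?thesis
    unfolding residual_in_def by blast
qed

lemma residual_in_compact_nonempty:
  fixes Y :: "'a::metric_space set"
  assumes "compact Y" "Y \<noteq> {}" "residual_in Y A"
  shows "A \<noteq> {}"
proof -
  obtain U :: "nat \<Rightarrow> 'a set" where
    U: "\<And>n. openin (top_of_set Y) (U n)" "\<And>n. Y \<subseteq> closure (U n)" and UA: "Y \<inter> (\<Inter>n. U n) \<subseteq> A"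
    using assms(3) unfolding residual_in_def by metis
  have "top_of_set Y closure_of (\<Inter>n. U n) = topspace (top_of_set Y)"
  proof (rule Baire_category[OF disjI2])
    show "locally_compact_space (top_of_set Y) \<and> regular_space (top_of_set Y)"
      using assms(1) regular_space_subtopology[OF regular_space_euclidean]
      by (simp add: compact_imp_locally_compact_space compact_space_subtopology)
    show "countable (range U)" by simp
    fix T assume "T \<in> range U"
    then obtain n where "T = U n" by blast
    have "U n \<subseteq> Y" using openin_subset[OF U(1)] by simp
    then show "openin (top_of_set Y) T \<and> top_of_set Y closure_of T = topspace (top_of_set Y)"
      using U \<open>T = U n\<close> by (auto simp: closure_of_subtopology Int_absorb1)
  qed
  then have "Y \<inter> (\<Inter>n. U n) \<noteq> {}"
    using assms(2) closure_of_restrict[of "top_of_set Y" "\<Inter>n. U n"] by auto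
  with UA show ?thesis by blast
qed

lemma tds_action:
  assumes "tds X act"
  shows tds_action_in: "x \<in> X \<Longrightarrow> act g x \<in> X"
    and tds_action_inverse: "x \<in> X \<Longrightarrow> act g (act (- g) x) = x"
    and tds_action_inverse': "x \<in> X \<Longrightarrow> act (- g) (act g x) = x"
    and tds_action_continuous: "continuous_on X (act g)"
proof -
  have "homeomorphism X X (act g) (act (- g))"
    using assms by (simp add: tds_def)
  then show "x \<in> X \<Longrightarrow> act g x \<in> X" "x \<in> X \<Longrightarrow> act g (act (- g) x) = x"
    "x \<in> X \<Longrightarrow> act (- g) (act g x) = x" "continuous_on X (act g)"
    unfolding homeomorphism_def by blast+
qed

lemma minimal_tds_factor:
  assumes "minimal_tds X act" "factor_map X act Y actY p"
  shows "minimal_tds Y actY"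
  unfolding minimal_tds_def
proof (intro conjI allI impI)
  show "tds Y actY" using assms(2) by (simp add: factor_map_def)
  fix A assume A: "A \<subseteq> Y \<and> A \<noteq> {} \<and> closed A \<and> (\<forall>g. actY g ` A \<subseteq> A)"
  have tdsX: "tds X act"
    and minimal: "\<And>B. B \<subseteq> X \<Longrightarrow> B \<noteq> {} \<Longrightarrow> closed B \<Longrightarrow> (\<forall>g. act g ` B \<subseteq> B) \<Longrightarrow> B = X"
    using assms(1) by (auto simp: minimal_tds_def)
  have cont: "continuous_on X p" and onto: "p ` X = Y"
    and equivariant: "\<And>g x. x \<in> X \<Longrightarrow> p (act g x) = actY g (p x)"
    using assms(2) by (auto simp: factor_map_def)
  let ?B = "X \<inter> p -` A"
  have "closedin (top_of_set X) ?B"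
    using cont A by (intro continuous_closedin_preimage) auto
  then have "closed ?B"
    using tdsX closedin_closed_trans compact_imp_closed by (auto simp: tds_def)
  moreover have "?B \<noteq> {}"
    using A onto by blast
  moreover have "act g ` ?B \<subseteq> ?B" for g
    using A equivariant tds_action_in[OF tdsX] by (auto simp: image_subset_iff)
  ultimately have "?B = X"
    using minimal by blast
  then show "A = Y"
    using A onto by blast
qed

lemma minimal_tds_orbit_dense:
  assumes "minimal_tds X act" "x \<in> X"
  shows "X \<subseteq> closure (range (\<lambda>g. act g x))"
proof -
  let ?O = "range (\<lambda>g. act g x)"
  have tdsX: "tds X act"
    and minimal: "\<And>B. B \<subseteq> X \<Longrightarrow> B \<noteq> {} \<Longrightarrow> closed B \<Longrightarrow> (\<forall>g. act g ` B \<subseteq> B) \<Longrightarrow> B = X"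
    using assms(1) by (auto simp: minimal_tds_def)
  have "closure ?O \<subseteq> X"
    using tdsX tds_action_in[OF tdsX assms(2)]
    by (intro closure_minimal) (auto simp: tds_def compact_imp_closed)
  moreover have "act g ` closure ?O \<subseteq> closure ?O" for g
  proof (rule image_closure_subset)
    show "continuous_on (closure ?O) (act g)"
      using tds_action_continuous[OF tdsX] \<open>closure ?O \<subseteq> X\<close> by (rule continuous_on_subset)
    have "act g (act h x) = act (g + h) x" for h
      using tdsX assms(2) by (simp add: tds_def)
    then have "act g ` ?O \<subseteq> ?O"
      by auto
    then show "act g ` ?O \<subseteq> closure ?O"
      using closure_subset by blast
  qed simp
  moreover have "x \<in> closure ?O"
  proof -
    have "act 0 x = x"
      using tdsX assms(2) by (simp add: tds_def)
    then show ?thesis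
      using closure_subset by (metis rangeI subsetD)
  qed
  ultimately show ?thesis
    using minimal[of "closure ?O"] by blast
qed

lemma factor_map_translate_fibre_cover:
  assumes "factor_map X act Y actY p" "e > 0"
  obtains d where "d > 0"
    and "\<And>y C. y \<in> Y \<Longrightarrow> C \<subseteq> X \<Longrightarrow> {x \<in> X. p x = y} \<subseteq> (\<Union>c\<in>C. ball c d) \<Longrightarrow>
           {x \<in> X. p x = actY g y} \<subseteq> (\<Union>c\<in>act g ` C. ball c e)"
proof -
  have tdsX: "tds X act" and tdsY: "tds Y actY"
    and equivariant: "\<And>g x. x \<in> X \<Longrightarrow> p (act g x) = actY g (p x)"
    using assms(1) by (auto simp: factor_map_def)
  obtain d where "d > 0" and d: "\<forall>x\<in>X. \<forall>x'\<in>X. dist x' x < d \<longrightarrow> dist (act g x') (act g x) < e"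
    using compact_uniformly_continuous[OF tds_action_continuous[OF tdsX]] tdsX assms(2)
    unfolding uniformly_continuous_on_def tds_def by metis
  have "{x \<in> X. p x = actY g y} \<subseteq> (\<Union>c\<in>act g ` C. ball c e)"
    if "y \<in> Y" "C \<subseteq> X" and cover: "{x \<in> X. p x = y} \<subseteq> (\<Union>c\<in>C. ball c d)" for y C
  proof
    fix x assume x: "x \<in> {x \<in> X. p x = actY g y}"
    define z where "z = act (- g) x"
    have "z \<in> X" "act g z = x"
      using x tds_action_in[OF tdsX] tds_action_inverse[OF tdsX] by (auto simp: z_def)
    moreover have "p z = y"
      using x \<open>y \<in> Y\<close> equivariant tds_action_inverse'[OF tdsY] by (auto simp: z_def)
    ultimately obtain c where "c \<in> C" "dist c z < d"
      using cover by auto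
    then have "dist (act g c) x < e"
      using d \<open>z \<in> X\<close> \<open>act g z = x\<close> \<open>C \<subseteq> X\<close> by (metis subsetD dist_commute)
    then show "x \<in> (\<Union>c\<in>act g ` C. ball c e)"
      using \<open>c \<in> C\<close> by auto
  qed
  with \<open>d > 0\<close> show ?thesis
    using that by blast
qed

lemma fibre_closure_close_fibre:
  assumes "bounded X" "p ` X = Y" "E \<in> fibre_closure X Y p" "d > 0"
  obtains y where "y \<in> Y" "E \<subseteq> (\<Union>x\<in>{x \<in> X. p x = y}. ball x d)"
    "{x \<in> X. p x = y} \<subseteq> (\<Union>c\<in>E. ball c d)"
proof -
  obtain y where "y \<in> Y" and y: "hausdist E {x \<in> X. p x = y} < d"
    using assms(3,4) unfolding fibre_closure_def by blast
  have "E \<noteq> {}" "bounded E" "{x \<in> X. p x = y} \<noteq> {}" "bounded {x \<in> X. p x = y}"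
    using assms(1-3) \<open>y \<in> Y\<close> by (auto simp: fibre_closure_def intro: bounded_subset)
  moreover have "hausdist {x \<in> X. p x = y} E < d"
    using y by (metis hausdist_commute)
  ultimately show ?thesis
    using that[OF \<open>y \<in> Y\<close>] y by (simp add: hausdist_less_imp_subset_Union_balls)
qed

lemma minimal_factor_translate_into_ball:
  assumes "minimal_tds X act" "factor_map X act Y actY p" "x0 \<in> X" "y0 \<in> Y" "r > 0"
  obtains g \<theta> where "\<theta> > 0" "\<And>x. x \<in> X \<Longrightarrow> dist x x0 < \<theta> \<Longrightarrow> dist (actY g (p x)) y0 < r"
proof -
  have tdsX: "tds X act" and onto: "p ` X = Y" and cont: "continuous_on X p"
    and equivariant: "\<And>g x. x \<in> X \<Longrightarrow> p (act g x) = actY g (p x)"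
    using assms(2) by (auto simp: factor_map_def)
  have "y0 \<in> closure (range (\<lambda>g. actY g (p x0)))"
    using minimal_tds_orbit_dense[OF minimal_tds_factor[OF assms(1,2)]] assms(3,4) onto by blast
  then obtain g where g: "dist (actY g (p x0)) y0 < r / 2"
    using \<open>r > 0\<close> unfolding closure_approachable by (auto dest: spec[of _ "r / 2"])
  have "continuous_on X (\<lambda>x. p (act g x))"
    using tds_action_continuous[OF tdsX] tds_action_in[OF tdsX] cont
    by (auto intro: continuous_on_compose2)
  then obtain \<theta> where "\<theta> > 0"
    and \<theta>: "\<forall>x\<in>X. dist x x0 < \<theta> \<longrightarrow> dist (p (act g x)) (p (act g x0)) < r / 2"
    using \<open>x0 \<in> X\<close> half_gt_zero[OF \<open>r > 0\<close>] unfolding continuous_on_iff by blast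
  have "dist (actY g (p x)) y0 < r" if "x \<in> X" "dist x x0 < \<theta>" for x
  proof -
    have "dist (actY g (p x)) (actY g (p x0)) < r / 2"
      using \<theta> that equivariant \<open>x0 \<in> X\<close> by metis
    then show ?thesis
      using g dist_triangle[of "actY g (p x)" y0 "actY g (p x0)"] by linarith
  qed
  with \<open>\<theta> > 0\<close> show ?thesis
    using that by blast
qed

lemma fibre_closure_coverable_fibres_dense:
  assumes "minimal_tds X act" "factor_map X act Y actY p"
    and E: "E \<in> fibre_closure X Y p" "finite E" and "e > 0"
  shows "Y \<subseteq> closure {y \<in> Y. coverable_by_balls {x \<in> X. p x = y} (card E) e}"
proof
  fix y0 assume "y0 \<in> Y"
  have tdsX: "tds X act" and tdsY: "tds Y actY" and onto: "p ` X = Y"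
    using assms(2) by (auto simp: factor_map_def)
  have "bounded X"
    using tdsX by (simp add: tds_def compact_imp_bounded)
  obtain e0 where "e0 \<in> E" and "E \<subseteq> X"
    using E(1) by (auto simp: fibre_closure_def)
  show "y0 \<in> closure {y \<in> Y. coverable_by_balls {x \<in> X. p x = y} (card E) e}"
    unfolding closure_approachable
  proof (intro allI impI)
    fix r :: real assume "r > 0"
    obtain g \<theta> where "\<theta> > 0" and g: "\<And>x. x \<in> X \<Longrightarrow> dist x e0 < \<theta> \<Longrightarrow> dist (actY g (p x)) y0 < r"
      using minimal_factor_translate_into_ball[OF assms(1,2) _ \<open>y0 \<in> Y\<close> \<open>r > 0\<close>] \<open>e0 \<in> E\<close> \<open>E \<subseteq> X\<close>
      by blast
    obtain \<delta> where "\<delta> > 0" and translate: "\<And>y C. y \<in> Y \<Longrightarrow> C \<subseteq> X \<Longrightarrow>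
        {x \<in> X. p x = y} \<subseteq> (\<Union>c\<in>C. ball c \<delta>) \<Longrightarrow>
        {x \<in> X. p x = actY g y} \<subseteq> (\<Union>c\<in>act g ` C. ball c e)"
      by (rule factor_map_translate_fibre_cover[OF assms(2) \<open>e > 0\<close>, where g = g]) blast
    have "min \<theta> \<delta> > 0"
      using \<open>\<theta> > 0\<close> \<open>\<delta> > 0\<close> by simp
    then obtain y where "y \<in> Y"
      and near_E: "E \<subseteq> (\<Union>x\<in>{x \<in> X. p x = y}. ball x (min \<theta> \<delta>))"
      and near_fibre: "{x \<in> X. p x = y} \<subseteq> (\<Union>c\<in>E. ball c (min \<theta> \<delta>))"
      using fibre_closure_close_fibre[OF \<open>bounded X\<close> onto E(1)] by blast
    from near_E obtain x where "x \<in> X" "p x = y" "dist x e0 < \<theta>"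
      using \<open>e0 \<in> E\<close> by (force simp: dist_commute)
    then have close: "dist (actY g y) y0 < r"
      using g by blast
    have "(\<Union>c\<in>E. ball c (min \<theta> \<delta>)) \<subseteq> (\<Union>c\<in>E. ball c \<delta>)"
      by (intro UN_mono order_refl subset_ball) simp
    with near_fibre have "{x \<in> X. p x = y} \<subseteq> (\<Union>c\<in>E. ball c \<delta>)"
      by (rule order_trans)
    then have "{x \<in> X. p x = actY g y} \<subseteq> (\<Union>c\<in>act g ` E. ball c e)"
      by (rule translate[OF \<open>y \<in> Y\<close> \<open>E \<subseteq> X\<close>])
    then have "coverable_by_balls {x \<in> X. p x = actY g y} (card E) e"
      unfolding coverable_by_balls_def using finite_imageI[OF E(2)] card_image_le[OF E(2)] by blast
    moreover have "actY g y \<in> Y"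
      using tds_action_in[OF tdsY \<open>y \<in> Y\<close>] .
    ultimately show "\<exists>y'\<in>{y \<in> Y. coverable_by_balls {x \<in> X. p x = y} (card E) e}. dist y' y0 < r"
      using close by blast
  qed
qed

lemma residual_in_coverable_fibres:
  assumes "minimal_tds X act" "factor_map X act Y actY p"
    and E: "E \<in> fibre_closure X Y p" "finite E"
  shows "residual_in Y {y \<in> Y. \<forall>e>0. coverable_by_balls {x \<in> X. p x = y} (card E) e}"
proof -
  have "compact X" "continuous_on X p" "p ` X = Y"
    using assms(2) by (auto simp: factor_map_def tds_def)
  define covered where
    "covered k = {y \<in> Y. coverable_by_balls {x \<in> X. p x = y} (card E) (inverse (real (Suc k)))}"
    for k
  have "Y \<inter> (\<Inter>k. covered k) \<subseteq> {y \<in> Y. \<forall>e>0. coverable_by_balls {x \<in> X. p x = y} (card E) e}"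
  proof (intro subsetI CollectI conjI allI impI)
    fix y assume "y \<in> Y \<inter> (\<Inter>k. covered k)"
    then show "y \<in> Y" by blast
  next
    fix y and e :: real assume y: "y \<in> Y \<inter> (\<Inter>k. covered k)" and "e > 0"
    then obtain k where k: "inverse (real (Suc k)) < e"
      using reals_Archimedean by blast
    have "coverable_by_balls {x \<in> X. p x = y} (card E) (inverse (real (Suc k)))"
      using y by (simp add: covered_def)
    then show "coverable_by_balls {x \<in> X. p x = y} (card E) e"
      using less_imp_le[OF k] by (rule coverable_by_balls_mono)
  qed
  moreover have "openin (top_of_set Y) (covered k)" for k
    using openin_coverable_fibres[OF \<open>compact X\<close> \<open>continuous_on X p\<close>] \<open>p ` X = Y\<close>
    by (simp add: covered_def)
  moreover have "Y \<subseteq> closure (covered k)" for k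
    unfolding covered_def by (rule fibre_closure_coverable_fibres_dense[OF assms]) simp
  ultimately show ?thesis
    unfolding residual_in_def by blast
qed

theorem lemma3p1:
  fixes X :: "'a::metric_space set" and act :: "'g::group_add \<Rightarrow> 'a \<Rightarrow> 'a"
    and Y :: "'b::metric_space set" and actY :: "'g \<Rightarrow> 'b \<Rightarrow> 'b"
    and p :: "'a \<Rightarrow> 'b" and N :: enat
  assumes "countable (UNIV :: 'g set)" and "infinite (UNIV :: 'g set)"
    and "minimal_tds X act"
    and "max_equicontinuous_factor X act Y actY p"
    and "almost_N_to_one X Y p N"
  shows "\<forall>E \<in> fibre_closure X Y p. ecard E \<ge> N"
proof
  fix E assume E: "E \<in> fibre_closure X Y p"
  show "ecard E \<ge> N"
  proof (cases "finite E")
    case True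
    have factor: "factor_map X act Y actY p"
      using assms(4) by (simp add: max_equicontinuous_factor_def)
    then have "compact Y" "Y \<noteq> {}"
      using E by (auto simp: factor_map_def tds_def fibre_closure_def)
    moreover have "residual_in Y ({y \<in> Y. \<forall>e>0. coverable_by_balls {x \<in> X. p x = y} (card E) e}
        \<inter> {y \<in> Y. ecard {x \<in> X. p x = y} = N})"
      using residual_in_coverable_fibres[OF assms(3) factor E True] assms(5)
      unfolding almost_N_to_one_def by (rule residual_in_Int)
    ultimately obtain y where
      "\<And>e. e > 0 \<Longrightarrow> coverable_by_balls {x \<in> X. p x = y} (card E) e" "ecard {x \<in> X. p x = y} = N"
      using residual_in_compact_nonempty by blast
    then have "N \<le> enat (card E)"
      using ecard_le_if_coverable_by_balls by metis
    then show ?thesis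
      using True by (simp add: ecard_def)
  qed (simp add: ecard_def)
qed

end
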